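(* Let $\mathcal{N}$ be a 2-step nilpotent Lie algebra over $\mathbb{R}$ whose commutator ideal $\mathcal{Z}=[\mathcal{N},\mathcal{N}]$ coincides with its center, and let $\mathcal{V}$ be a subspace with $\mathcal{N}=\mathcal{V}\oplus\mathcal{Z}$. Let $q\ge2$ and assume there is an $\mathbb{R}$-basis $Y_1,\dots,Y_q$ of $\mathcal{V}$ such that $\{[Y_1,Y_j]: j=2,\dots,q\}$ is linearly independent. Let $f:\mathcal{N}\to\mathcal{N}$ be a Lie ring homomorphism with $f(\mathcal{V})\subseteq\mathcal{V}$. Then: (A) if $f$ is a Lie ring automorphism and $f(\mathcal{V})=\mathcal{V}$, then $f$ is a Lie algebra automorphism; (B) if there is an $\mathbb{R}$-basis $X_1,\dots,X_q$ of $\mathcal{V}$ with $f(X_1)=Y_1$ and $f([X_1,X_j])\neq0$ for all $j=2,\dots,q$, then $f$ is a Lie algebra homomorphism. In particular, $\mathcal{N}$ satisfies the partial automatic continuity, and for every Lie ring automorphism $f$ of $\mathcal{N}$ there exist a central automorphism $\mu$ and a Lie algebra automorphism $\overline{f}$ of $\mathcal{N}$ such that $f=\mu\circ\overline{f}$.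
   Context: A Lie ring homomorphism between real Lie algebras is an additive map preserving the Lie bracket (not assumed $\mathbb{R}$-linear); a Lie ring automorphism is a bijective Lie ring homomorphism of a Lie algebra onto itself. A Lie algebra homomorphism/automorphism is an $\mathbb{R}$-linear one. A central automorphism of a Lie algebra $\mathcal{N}$ with center $\mathfrak{z}$ is a Lie ring automorphism $f$ with $f(x)-x\in\mathfrak{z}$ for all $x$. Field automorphisms of $\mathcal{N}$: if $\mathcal{N}=\mathcal{N}_1\oplus\cdots\oplus\mathcal{N}_k$ (ideals), for each $\mathcal{N}_i$ that is the realification of a complex Lie algebra choose a $\mathbb{C}$-basis $e_1,\dots,e_m$ and a field automorphism $\varphi$ of $\mathbb{C}$ fixing the structure constants and set $\sigma_i(\sum x_le_l)=\sum\varphi(x_l)e_l$, otherwise $\sigma_i=\mathrm{id}$; $\sigma_1\times\cdots\times\sigma_k$ is a field automorphism. $\mathcal{N}$ satisfies the partial automatic continuity if every Lie ring automorphism is a composition $\mu\circ\overline{f}\circ\sigma$ of a central automorphism, a Lie algebra automorphism and a field automorphism. *)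

theory Defs
  imports "HOL-Analysis.Analysis"
begin

definition lie_algebra :: "('a::real_vector \<Rightarrow> 'a \<Rightarrow> 'a) \<Rightarrow> bool" where
  "lie_algebra br \<longleftrightarrow>
     (\<forall>x. linear (br x)) \<and> (\<forall>y. linear (\<lambda>x. br x y)) \<and>
     (\<forall>x. br x x = 0) \<and>
     (\<forall>x y z. br x (br y z) + br y (br z x) + br z (br x y) = 0)"

definition center :: "('a::real_vector \<Rightarrow> 'a \<Rightarrow> 'a) \<Rightarrow> 'a set" where
  "center br = {z. \<forall>x. br z x = 0}"

definition derived :: "('a::real_vector \<Rightarrow> 'a \<Rightarrow> 'a) \<Rightarrow> 'a set" where
  "derived br = span {br x y | x y. True}"

definition two_step_nilpotent :: "('a::real_vector \<Rightarrow> 'a \<Rightarrow> 'a) \<Rightarrow> bool" where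
  "two_step_nilpotent br \<longleftrightarrow>
     (\<forall>x y z. br x (br y z) = 0) \<and> (\<exists>x y. br x y \<noteq> 0)"

definition lie_ring_hom :: "('a::real_vector \<Rightarrow> 'a \<Rightarrow> 'a) \<Rightarrow> ('a \<Rightarrow> 'a) \<Rightarrow> bool" where
  "lie_ring_hom br f \<longleftrightarrow>
     (\<forall>x y. f (x + y) = f x + f y) \<and> (\<forall>x y. f (br x y) = br (f x) (f y))"

definition lie_ring_aut :: "('a::real_vector \<Rightarrow> 'a \<Rightarrow> 'a) \<Rightarrow> ('a \<Rightarrow> 'a) \<Rightarrow> bool" where
  "lie_ring_aut br f \<longleftrightarrow> lie_ring_hom br f \<and> bij f"

definition lie_alg_hom :: "('a::real_vector \<Rightarrow> 'a \<Rightarrow> 'a) \<Rightarrow> ('a \<Rightarrow> 'a) \<Rightarrow> bool" where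
  "lie_alg_hom br f \<longleftrightarrow> lie_ring_hom br f \<and> linear f"

definition lie_alg_aut :: "('a::real_vector \<Rightarrow> 'a \<Rightarrow> 'a) \<Rightarrow> ('a \<Rightarrow> 'a) \<Rightarrow> bool" where
  "lie_alg_aut br f \<longleftrightarrow> lie_alg_hom br f \<and> bij f"

definition central_aut :: "('a::real_vector \<Rightarrow> 'a \<Rightarrow> 'a) \<Rightarrow> ('a \<Rightarrow> 'a) \<Rightarrow> bool" where
  "central_aut br f \<longleftrightarrow> lie_ring_aut br f \<and> (\<forall>x. f x - x \<in> center br)"

definition is_basis_of :: "'a::real_vector set \<Rightarrow> (nat \<Rightarrow> 'a) \<Rightarrow> nat \<Rightarrow> nat \<Rightarrow> bool" where
  "is_basis_of V Y lo hi \<longleftrightarrow>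
     inj_on Y {lo..hi} \<and> independent (Y ` {lo..hi}) \<and> span (Y ` {lo..hi}) = V"

end

theory Submission
  imports Defs
begin

(* An additive map is Q-linear, so a bracket-preserving f can only fail to be R-linear
   through a ring endomorphism of R, and the only such endomorphism is the identity.
   If f X1 = Y1, then f maps the line R X1 into the centralizer of Y1 in V, which is
   R Y1; so f (t X1) = a t Y1, and comparing both sides of f [s X1, t w] = f [s t X1, w]
   for some w with f [X1, w] <> 0 shows that a is a ring endomorphism, hence a = id.
   The same centralizer argument gives f (t w) = t f w whenever f [X1, w] <> 0; such
   vectors together with X1 span V, and homogeneity passes from V to brackets, hence to
   the centre Z = [N, N], and to all of N = V + Z.
   An arbitrary Lie ring automorphism g becomes V-preserving when it is replaced on V by
   its composite with the projection onto V along Z; the new map differs from g by a map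
   into Z, which yields the central automorphism of the factorisation. *)

lemma real_ring_endomorphism_eq_id:
  fixes a :: "real \<Rightarrow> real"
  assumes add: "\<And>s t. a (s + t) = a s + a t" and mult: "\<And>s t. a (s * t) = a s * a t"
    and one: "a 1 = 1"
  shows "a x = x"
proof -
  interpret additive a by standard (rule add)
  have a_of_nat: "a (of_nat n) = of_nat n" for n
    by (induction n) (simp_all add: zero add one)
  have a_of_int: "a (of_int m) = of_int m" for m
    by (cases m rule: int_cases) (simp_all add: minus a_of_nat del: of_nat_Suc)
  have a_rat: "a r = r" if "r \<in> \<rat>" for r
  proof -
    from that obtain m n where n: "0 < n" and r: "r = of_int m / of_int n"
      by (rule Rats_cases')
    have "a (of_int n * r) = of_int m" using n r a_of_int by simp
    then have "of_int n * a r = of_int m" using mult a_of_int by simp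
    then have "a r = of_int m / of_int n" using n by (simp add: field_simps)
    then show ?thesis using r by simp
  qed
  have a_mono: "a s \<le> a t" if "s \<le> t" for s t
  proof -
    have "t - s = sqrt (t - s) * sqrt (t - s)" using that by simp
    then have "a (t - s) = a (sqrt (t - s)) * a (sqrt (t - s))" using mult by metis
    then have "0 \<le> a t - a s" using diff[of t s] by simp
    then show ?thesis by simp
  qed
  show ?thesis
  proof (rule ccontr)
    assume "a x \<noteq> x"
    then consider "a x < x" | "x < a x" by linarith
    then show False
    proof cases
      case 1
      then obtain r where "r \<in> \<rat>" "a x < r" "r < x" using Rats_dense_in_real by blast
      then show False using a_mono[of r x] a_rat by simp
    next
      case 2
      then obtain r where "r \<in> \<rat>" "x < r" "r < a x" using Rats_dense_in_real by blast
      then show False using a_mono[of x r] a_rat by simp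
    qed
  qed
qed

definition homogeneous_vectors :: "('a::real_vector \<Rightarrow> 'b::real_vector) \<Rightarrow> 'a set" where
  "homogeneous_vectors f = {w. \<forall>t. f (t *\<^sub>R w) = t *\<^sub>R f w}"

lemma subspace_homogeneous_vectors:
  fixes f :: "'a::real_vector \<Rightarrow> 'b::real_vector"
  assumes "Modules.additive f"
  shows "subspace (homogeneous_vectors f)"
proof -
  interpret additive f by (fact assms)
  show ?thesis by (auto simp: subspace_def homogeneous_vectors_def zero add scaleR_add_right)
qed

lemma linearI_homogeneous_vectors:
  assumes "Modules.additive f" and "homogeneous_vectors f = UNIV"
  shows "linear f"
  using assms by (intro linearI) (auto simp: Modules.additive_def homogeneous_vectors_def)

lemma lie_ring_hom_add: "lie_ring_hom br f \<Longrightarrow> f (x + y) = f x + f y"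
  by (simp add: lie_ring_hom_def)

lemma lie_ring_hom_bracket: "lie_ring_hom br f \<Longrightarrow> f (br x y) = br (f x) (f y)"
  by (simp add: lie_ring_hom_def)

lemma lie_ring_hom_additive: "lie_ring_hom br f \<Longrightarrow> Modules.additive f"
  by (simp add: lie_ring_hom_def Modules.additive_def)

lemma lie_ring_aut_comp:
  "lie_ring_aut br g \<Longrightarrow> lie_ring_aut br h \<Longrightarrow> lie_ring_aut br (g \<circ> h)"
  by (simp add: lie_ring_aut_def lie_ring_hom_def bij_comp)

lemma lie_ring_aut_inv:
  assumes "lie_ring_aut br h"
  shows "lie_ring_aut br (inv h)"
proof -
  have bij: "bij h" and hom: "lie_ring_hom br h" using assms by (auto simp: lie_ring_aut_def)
  have h_inv: "h (inv h x) = x" for x using bij by (simp add: bij_is_surj surj_f_inv_f)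
  have "inv h (x + y) = inv h x + inv h y" "inv h (br x y) = br (inv h x) (inv h y)" for x y
    by (rule injD[OF bij_is_inj[OF bij]],
        simp add: h_inv lie_ring_hom_add[OF hom] lie_ring_hom_bracket[OF hom])+
  then show ?thesis using bij_imp_bij_inv[OF bij] by (simp add: lie_ring_aut_def lie_ring_hom_def)
qed

lemma central_aut_comp_inv:
  assumes g: "lie_ring_aut br g" and h: "lie_ring_aut br h"
    and central: "\<And>x. g x - h x \<in> center br"
  shows "central_aut br (g \<circ> inv h)"
proof -
  have "h (inv h x) = x" for x using h by (simp add: lie_ring_aut_def bij_is_surj surj_f_inv_f)
  then have "(g \<circ> inv h) x - x \<in> center br" for x using central[of "inv h x"] by simp
  then show ?thesis
    using lie_ring_aut_comp[OF g lie_ring_aut_inv[OF h]] by (simp add: central_aut_def)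
qed

lemma lie_ring_aut_center_iff:
  assumes "lie_ring_aut br g"
  shows "g z \<in> center br \<longleftrightarrow> z \<in> center br"
proof -
  have hom: "lie_ring_hom br g" and bij: "bij g" using assms by (auto simp: lie_ring_aut_def)
  interpret additive g by (rule lie_ring_hom_additive[OF hom])
  have "br (g z) (g y) = 0 \<longleftrightarrow> br z y = 0" for y
    using bij_is_inj[OF bij] by (metis injD zero lie_ring_hom_bracket[OF hom])
  then show ?thesis using bij_is_surj[OF bij] by (simp add: center_def) (metis surjD)
qed

lemma is_basis_of_nonzero: "is_basis_of V X lo hi \<Longrightarrow> i \<in> {lo..hi} \<Longrightarrow> X i \<noteq> 0"
  by (metis dependent_zero image_eqI is_basis_of_def)

lemma is_basis_of_span_insert_first:
  assumes "is_basis_of V X 1 q" and "q \<ge> 1"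
  shows "V = span (insert (X 1) (X ` {2..q}))"
proof -
  have "insert 1 {2..q} = {1..q}" using assms(2) by auto
  then show ?thesis using assms(1) unfolding is_basis_of_def by (metis image_insert)
qed

locale real_lie_algebra =
  fixes br :: "'a::real_vector \<Rightarrow> 'a \<Rightarrow> 'a"
  assumes lie: "lie_algebra br"
begin

lemma bilinear_br: "bilinear br"
  using lie by (simp add: lie_algebra_def bilinear_def)

lemmas br_add_left = bilinear_ladd[OF bilinear_br]
  and br_add_right = bilinear_radd[OF bilinear_br]
  and br_diff_left = bilinear_lsub[OF bilinear_br]
  and br_diff_right = bilinear_rsub[OF bilinear_br]
  and br_scale_left = bilinear_lmul[OF bilinear_br]
  and br_scale_right = bilinear_rmul[OF bilinear_br]
  and br_zero_left [simp] = bilinear_lzero[OF bilinear_br]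
  and br_zero_right [simp] = bilinear_rzero[OF bilinear_br]

lemma br_self [simp]: "br x x = 0"
  using lie by (simp add: lie_algebra_def)

lemma br_antisym: "br y x = - br x y"
proof -
  have "br x y + br y x = 0"
    using br_add_left[of x y "x + y"] br_add_right[of x x y] br_add_right[of y x y] by simp
  then show ?thesis by (simp add: add_eq_0_iff)
qed

lemma subspace_center: "subspace (center br)"
  by (auto simp: subspace_def center_def br_add_left br_scale_left)

lemma center_br_left: "z \<in> center br \<Longrightarrow> br z x = 0"
  by (simp add: center_def)

lemma center_br_right: "z \<in> center br \<Longrightarrow> br x z = 0"
  using br_antisym[of z x] by (simp add: center_def)

lemma centralizer_of_bracket_independent:
  assumes inj: "inj_on (\<lambda>j. br y (Y j)) J"
    and indep: "independent ((\<lambda>j. br y (Y j)) ` J)"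
    and w: "w \<in> span (insert y (Y ` J))" and comm: "br y w = 0"
  shows "w \<in> span {y}"
proof -
  have lin: "linear (br y)" using lie by (simp add: lie_algebra_def)
  have "inj_on (br y) (Y ` J)" using inj by (intro inj_on_imageI) (simp add: comp_def)
  then have inj_span: "inj_on (br y) (span (Y ` J))"
    using linear_inj_on_span_iff_independent_image[OF lin] indep by (simp add: image_image)
  obtain k where k: "w - k *\<^sub>R y \<in> span (Y ` J)" using w by (auto simp: span_insert)
  have "br y (w - k *\<^sub>R y) = br y 0" using comm by (simp add: br_diff_right br_scale_right)
  then have "w = k *\<^sub>R y" using inj_onD[OF inj_span _ k span_zero] by simp
  then show ?thesis by (simp add: span_base span_scale)
qed

end

locale split_lie_algebra = real_lie_algebra +
  fixes V :: "'a::real_vector set"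
  assumes derived_eq_center: "derived br = center br"
    and subspace_V: "subspace V"
    and V_inter_center: "V \<inter> center br = {0}"
    and V_plus_center: "{v + z | v z. v \<in> V \<and> z \<in> center br} = UNIV"
begin

lemma br_in_center: "br x y \<in> center br"
proof -
  have "br x y \<in> span {br x y | x y. True}" by (rule span_base) blast
  then show ?thesis using derived_eq_center by (simp add: derived_def)
qed

lemma V_center_decomp:
  obtains v z where "v \<in> V" "z \<in> center br" "x = v + z"
proof -
  have "x \<in> {v + z | v z. v \<in> V \<and> z \<in> center br}" using V_plus_center by simp
  then show ?thesis using that by blast
qed

lemma V_center_sum_eq_0:
  assumes "v \<in> V" "z \<in> center br" "v + z = 0"
  shows "v = 0" "z = 0"
proof -
  have "v = - z" using assms(3) by (simp add: eq_neg_iff_add_eq_0)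
  then have "v \<in> center br" using assms(2) subspace_center subspace_neg by metis
  then show "v = 0" using assms(1) V_inter_center by blast
  then show "z = 0" using assms(3) by simp
qed

lemma br_add_center:
  "z \<in> center br \<Longrightarrow> z' \<in> center br \<Longrightarrow> br (v + z) (w + z') = br v w"
  by (simp add: br_add_left br_add_right center_br_left center_br_right)

lemma exists_br_nonzero:
  assumes "v \<in> V" "v \<noteq> 0"
  shows "\<exists>w\<in>V. br v w \<noteq> 0"
proof -
  have "v \<notin> center br" using assms V_inter_center by blast
  then obtain x where x: "br v x \<noteq> 0" by (auto simp: center_def)
  obtain w z where "w \<in> V" "z \<in> center br" "x = w + z" by (rule V_center_decomp)
  then show ?thesis using x by (auto simp: br_add_right center_br_right)
qed

lemma linear_if_homogeneous_on_V:
  assumes hom: "lie_ring_hom br f" and V: "V \<subseteq> homogeneous_vectors f"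
  shows "linear f"
proof -
  let ?H = "homogeneous_vectors f"
  have H: "subspace ?H" by (rule subspace_homogeneous_vectors[OF lie_ring_hom_additive[OF hom]])
  have br_V: "br v w \<in> ?H" if "v \<in> V" for v w
  proof -
    have "f (t *\<^sub>R v) = t *\<^sub>R f v" for t using that V by (auto simp: homogeneous_vectors_def)
    then have "f (t *\<^sub>R br v w) = t *\<^sub>R f (br v w)" for t
      by (simp add: br_scale_left[symmetric] lie_ring_hom_bracket[OF hom])
    then show ?thesis by (simp add: homogeneous_vectors_def)
  qed
  have "br x y \<in> ?H" for x y
  proof -
    obtain v z where "v \<in> V" "z \<in> center br" "x = v + z" by (rule V_center_decomp)
    moreover obtain w z' where "z' \<in> center br" "y = w + z'" by (rule V_center_decomp)
    ultimately have "br x y = br v w" using br_add_center by simp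
    then show ?thesis using br_V[OF \<open>v \<in> V\<close>] by simp
  qed
  then have "span {br x y | x y. True} \<subseteq> ?H" by (intro span_minimal[OF _ H]) blast
  then have center: "center br \<subseteq> ?H" using derived_eq_center by (simp add: derived_def)
  have "x \<in> ?H" for x
  proof -
    obtain v z where "v \<in> V" "z \<in> center br" "x = v + z" by (rule V_center_decomp)
    then show ?thesis using V center subspace_add[OF H, of v z] by auto
  qed
  then show ?thesis
    by (intro linearI_homogeneous_vectors[OF lie_ring_hom_additive[OF hom]]) auto
qed

definition proj_V :: "'a \<Rightarrow> 'a" where
  "proj_V x = (SOME v. v \<in> V \<and> x - v \<in> center br)"

lemma proj_V: "proj_V x \<in> V" "x - proj_V x \<in> center br"
proof -
  obtain v z where "v \<in> V" "z \<in> center br" "x = v + z" by (rule V_center_decomp)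
  then have "\<exists>v. v \<in> V \<and> x - v \<in> center br" by auto
  then have "proj_V x \<in> V \<and> x - proj_V x \<in> center br" unfolding proj_V_def by (rule someI_ex)
  then show "proj_V x \<in> V" "x - proj_V x \<in> center br" by auto
qed

lemma proj_V_unique:
  assumes "v \<in> V" "x - v \<in> center br"
  shows "proj_V x = v"
proof -
  have "proj_V x - v \<in> V" using subspace_diff[OF subspace_V proj_V(1) assms(1)] .
  moreover have "(x - v) - (x - proj_V x) \<in> center br"
    using subspace_diff[OF subspace_center assms(2) proj_V(2)[of x]] .
  then have "proj_V x - v \<in> center br" by simp
  ultimately have "proj_V x - v = 0" using V_inter_center by blast
  then show ?thesis by simp
qed

lemma proj_V_add_center: "v \<in> V \<Longrightarrow> z \<in> center br \<Longrightarrow> proj_V (v + z) = v"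
  by (simp add: proj_V_unique)

lemma proj_V_add: "proj_V (x + y) = proj_V x + proj_V y"
proof (rule proj_V_unique)
  show "proj_V x + proj_V y \<in> V" using subspace_add[OF subspace_V proj_V(1) proj_V(1)] .
  show "x + y - (proj_V x + proj_V y) \<in> center br"
    using subspace_add[OF subspace_center proj_V(2)[of x] proj_V(2)[of y]]
    by (simp add: add_diff_add)
qed

lemma proj_V_center: "z \<in> center br \<Longrightarrow> proj_V z = 0"
  using proj_V_add_center[of 0 z] subspace_0[OF subspace_V] by simp

lemma br_proj_V: "br (proj_V x) (proj_V y) = br x y"
proof -
  have "br x y = br (proj_V x + (x - proj_V x)) (proj_V y + (y - proj_V y))" by simp
  also have "\<dots> = br (proj_V x) (proj_V y)" by (intro br_add_center proj_V(2))
  finally show ?thesis by simp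
qed

(* The \overline{f} of the factorisation: it preserves V and differs from g by a map into
   the centre. *)
definition fbar :: "('a \<Rightarrow> 'a) \<Rightarrow> 'a \<Rightarrow> 'a" where
  "fbar g x = proj_V (g (proj_V x)) + g (x - proj_V x)"

context
  fixes g assumes g: "lie_ring_aut br g"
begin

interpretation additive g
  using g lie_ring_hom_additive by (auto simp: lie_ring_aut_def)

lemma g_inv_g: "g (inv g x) = x"
  using g by (simp add: lie_ring_aut_def bij_is_surj surj_f_inv_f)

lemma g_bracket: "g (br x y) = br (g x) (g y)"
  using g by (simp add: lie_ring_aut_def lie_ring_hom_def)

lemma inj_g: "inj g"
  using g by (simp add: lie_ring_aut_def bij_is_inj)

lemmas g_center = lie_ring_aut_center_iff[OF g]

lemma fbar_add_center: "v \<in> V \<Longrightarrow> z \<in> center br \<Longrightarrow> fbar g (v + z) = proj_V (g v) + g z"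
  by (simp add: fbar_def proj_V_add_center)

lemma fbar_V_eq: "v \<in> V \<Longrightarrow> fbar g v = proj_V (g v)"
  using fbar_add_center[of v 0] subspace_0[OF subspace_center] zero by simp

lemma fbar_center: "z \<in> center br \<Longrightarrow> fbar g z = g z"
  using fbar_add_center[of 0 z] subspace_0[OF subspace_V]
    proj_V_center[OF subspace_0[OF subspace_center]] zero by simp

lemma diff_fbar_in_center: "g x - fbar g x \<in> center br"
proof -
  have "g x = g (proj_V x) + g (x - proj_V x)" using add[of "proj_V x" "x - proj_V x"] by simp
  then show ?thesis using proj_V(2)[of "g (proj_V x)"] by (simp add: fbar_def)
qed

lemma proj_V_image_onto_V:
  assumes "w \<in> V"
  obtains v where "v \<in> V" "proj_V (g v) = w"
proof
  let ?u = "inv g w"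
  have "g (?u - proj_V ?u) \<in> center br" using proj_V(2) g_center by blast
  then have "w - g (proj_V ?u) \<in> center br" by (simp add: diff g_inv_g)
  then have "g (proj_V ?u) - w \<in> center br"
    using subspace_neg[OF subspace_center] minus_diff_eq by metis
  then show "proj_V (g (proj_V ?u)) = w" using assms by (intro proj_V_unique) simp_all
qed (rule proj_V)

lemma fbar_V: "fbar g ` V = V"
proof
  show "fbar g ` V \<subseteq> V" using fbar_V_eq proj_V(1) by auto
  show "V \<subseteq> fbar g ` V"
  proof
    fix w assume "w \<in> V"
    then obtain v where "v \<in> V" "proj_V (g v) = w" by (rule proj_V_image_onto_V)
    then show "w \<in> fbar g ` V" using fbar_V_eq by force
  qed
qed

lemma fbar_lie_ring_hom: "lie_ring_hom br (fbar g)"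
proof -
  have "fbar g (x + y) = fbar g x + fbar g y" for x y
    by (simp add: fbar_def proj_V_add add add_diff_add ac_simps)
  moreover have "fbar g (br x y) = br (fbar g x) (fbar g y)" for x y
  proof -
    have "br (fbar g x) (fbar g y) = br (proj_V (g (proj_V x))) (proj_V (g (proj_V y)))"
      unfolding fbar_def using proj_V(2) g_center by (intro br_add_center) blast+
    also have "\<dots> = br (g (proj_V x)) (g (proj_V y))" by (rule br_proj_V)
    also have "\<dots> = g (br (proj_V x) (proj_V y))" by (rule g_bracket[symmetric])
    also have "\<dots> = fbar g (br x y)" by (simp add: br_proj_V fbar_center br_in_center)
    finally show ?thesis by simp
  qed
  ultimately show ?thesis by (simp add: lie_ring_hom_def)
qed

lemma inj_fbar: "inj (fbar g)"
proof -
  interpret fbar: additive "fbar g" by (rule lie_ring_hom_additive[OF fbar_lie_ring_hom])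
  have "x = 0" if "fbar g x = 0" for x
  proof -
    obtain v z where vz: "v \<in> V" "z \<in> center br" "x = v + z" by (rule V_center_decomp)
    then have "proj_V (g v) + g z = 0" using that fbar_add_center by simp
    then have "proj_V (g v) = 0" "g z = 0"
      using V_center_sum_eq_0 proj_V(1) g_center vz(2) by blast+
    then have "g v \<in> center br" "z = 0" using proj_V(2)[of "g v"] injD[OF inj_g] zero
      by auto
    then show "x = 0" using g_center vz V_inter_center by auto
  qed
  then show ?thesis by (metis injI eq_iff_diff_eq_0 fbar.diff)
qed

lemma surj_fbar: "surj (fbar g)"
proof -
  have "y \<in> range (fbar g)" for y
  proof -
    obtain v where v: "v \<in> V" "proj_V (g v) = proj_V y" using proj_V(1)
      by (rule proj_V_image_onto_V)
    have "inv g (y - proj_V y) \<in> center br" using proj_V(2) g_center g_inv_g by metis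
    then have "fbar g (v + inv g (y - proj_V y)) = y" using fbar_add_center v g_inv_g by simp
    then show ?thesis by (metis rangeI)
  qed
  then show ?thesis by blast
qed

lemma fbar_lie_ring_aut: "lie_ring_aut br (fbar g)"
  using fbar_lie_ring_hom inj_fbar surj_fbar by (simp add: lie_ring_aut_def bij_def)

end

end

locale split_lie_algebra_line_centralizer = split_lie_algebra +
  fixes y :: 'a
  assumes y_in_V: "y \<in> V" and y_nonzero: "y \<noteq> 0"
    and centralizer_y: "w \<in> V \<Longrightarrow> br y w = 0 \<Longrightarrow> w \<in> span {y}"
begin

lemma image_line_in_line:
  assumes hom: "lie_ring_hom br f" and fV: "f ` V \<subseteq> V" and x: "x \<in> V" and fx: "f x = y"
  obtains a where "\<And>t. f (t *\<^sub>R x) = a t *\<^sub>R y"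
proof -
  have "\<exists>c. f (t *\<^sub>R x) = c *\<^sub>R y" for t
  proof -
    have "f (t *\<^sub>R x) \<in> V" using fV subspace_scale[OF subspace_V x] by blast
    moreover have "br y (f (t *\<^sub>R x)) = 0"
      using lie_ring_hom_bracket[OF hom, of x "t *\<^sub>R x"] lie_ring_hom_additive[OF hom]
      by (simp add: fx br_scale_right additive.zero)
    ultimately show ?thesis using centralizer_y by (auto simp: span_singleton)
  qed
  then show ?thesis using that by metis
qed

lemma homogeneous_on_line:
  assumes hom: "lie_ring_hom br f" and fV: "f ` V \<subseteq> V" and x: "x \<in> V" and fx: "f x = y"
    and nz: "f (br x w) \<noteq> 0"
  shows "f (t *\<^sub>R x) = t *\<^sub>R y"
proof -
  obtain a where fa: "\<And>t. f (t *\<^sub>R x) = a t *\<^sub>R y" using image_line_in_line[OF hom fV x fx] by blast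
  have cancel: "c *\<^sub>R y = d *\<^sub>R y \<Longrightarrow> c = d" for c d using y_nonzero by simp
  define e where "e = f (br x w)"
  have f_br_scaled: "f (br (s *\<^sub>R x) w) = a s *\<^sub>R e" for s
    using lie_ring_hom_bracket[OF hom, of "s *\<^sub>R x" w] lie_ring_hom_bracket[OF hom, of x w]
    by (simp add: e_def fa fx br_scale_left)
  have "a (s + t) = a s + a t" for s t
    using fa[of "s + t"] fa[of s] fa[of t] lie_ring_hom_add[OF hom, of "s *\<^sub>R x" "t *\<^sub>R x"]
    by (intro cancel) (simp add: scaleR_add_left)
  moreover have "a (s * t) = a s * a t" for s t
  proof -
    have "a (s * t) *\<^sub>R e = f (br (s *\<^sub>R x) (t *\<^sub>R w))"
      by (simp add: f_br_scaled[symmetric] br_scale_left br_scale_right mult.commute)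
    also have "\<dots> = a s *\<^sub>R f (br (t *\<^sub>R x) w)"
      using lie_ring_hom_bracket[OF hom, of "s *\<^sub>R x" "t *\<^sub>R w"]
        lie_ring_hom_bracket[OF hom, of x "t *\<^sub>R w"]
      by (simp add: fa fx br_scale_left br_scale_right)
    also have "\<dots> = (a s * a t) *\<^sub>R e" by (simp add: f_br_scaled)
    finally show ?thesis using nz by (simp add: e_def)
  qed
  moreover have "a 1 = 1" using fa[of 1] fx by (intro cancel) simp
  ultimately show ?thesis using fa real_ring_endomorphism_eq_id[of a] by metis
qed

lemma homogeneous_if_bracket_nonzero:
  assumes hom: "lie_ring_hom br f" and fV: "f ` V \<subseteq> V"
    and line: "\<And>t. f (t *\<^sub>R x) = t *\<^sub>R y" and w: "w \<in> V" and nz: "f (br x w) \<noteq> 0"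
  shows "w \<in> homogeneous_vectors f"
proof -
  interpret additive f by (rule lie_ring_hom_additive[OF hom])
  have fx: "f x = y" using line[of 1] by simp
  have ad_y: "br y (f u) = f (br x u)" for u using lie_ring_hom_bracket[OF hom] fx by simp
  have "f (t *\<^sub>R w) = t *\<^sub>R f w" for t
  proof -
    let ?d = "f (t *\<^sub>R w) - t *\<^sub>R f w"
    have "?d \<in> V"
      using fV w subspace_V by (meson image_subset_iff subspace_diff subspace_scale)
    moreover have "br y ?d = 0"
      using lie_ring_hom_bracket[OF hom, of "t *\<^sub>R x" w]
      by (simp add: br_diff_right br_scale_right br_scale_left ad_y line)
    ultimately obtain c where c: "?d = c *\<^sub>R y" using centralizer_y by (auto simp: span_singleton)
    have "c *\<^sub>R f (br x w) = br ?d (f w)"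
      by (simp add: c br_scale_left ad_y)
    also have "\<dots> = 0"
      using lie_ring_hom_bracket[OF hom, of "t *\<^sub>R w" w]
      by (simp add: br_diff_left br_scale_left zero)
    finally have "c = 0" using nz by simp
    then show ?thesis using c by simp
  qed
  then show ?thesis by (simp add: homogeneous_vectors_def)
qed

lemma linear_if_brackets_nonzero:
  assumes hom: "lie_ring_hom br f" and fV: "f ` V \<subseteq> V" and x: "x \<in> V" and fx: "f x = y"
    and S: "S \<subseteq> V" "S \<noteq> {}" and nz: "\<And>w. w \<in> S \<Longrightarrow> f (br x w) \<noteq> 0"
    and span: "V \<subseteq> span (insert x S)"
  shows "linear f"
proof -
  obtain w0 where "w0 \<in> S" using S by blast
  then have line: "f (t *\<^sub>R x) = t *\<^sub>R y" for t
    using homogeneous_on_line[OF hom fV x fx nz] by blast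
  have "insert x S \<subseteq> homogeneous_vectors f"
    using line fx S homogeneous_if_bracket_nonzero[OF hom fV line] nz
    by (auto simp: homogeneous_vectors_def)
  then have "V \<subseteq> homogeneous_vectors f"
    using span span_minimal[OF _ subspace_homogeneous_vectors[OF lie_ring_hom_additive[OF hom]]]
    by blast
  then show ?thesis by (rule linear_if_homogeneous_on_V[OF hom])
qed

lemma lie_alg_hom_if_basis_brackets_nonzero:
  assumes hom: "lie_ring_hom br f" and fV: "f ` V \<subseteq> V"
    and X: "is_basis_of V X 1 q" and q: "q \<ge> 2" and fX: "f (X 1) = y"
    and nz: "\<forall>j\<in>{2..q}. f (br (X 1) (X j)) \<noteq> 0"
  shows "lie_alg_hom br f"
proof -
  have X_span: "V = span (insert (X 1) (X ` {2..q}))"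
    using is_basis_of_span_insert_first[OF X] q by simp
  then have X_sub: "insert (X 1) (X ` {2..q}) \<subseteq> V" by (simp add: span_superset)
  have "linear f"
  proof (rule linear_if_brackets_nonzero[OF hom fV _ fX])
    show "X 1 \<in> V" "X ` {2..q} \<subseteq> V" using X_sub by auto
    show "X ` {2..q} \<noteq> {}" using q by simp
    show "f (br (X 1) w) \<noteq> 0" if "w \<in> X ` {2..q}" for w using that nz by blast
    show "V \<subseteq> span (insert (X 1) (X ` {2..q}))" using X_span by simp
  qed
  then show ?thesis using hom by (simp add: lie_alg_hom_def)
qed

lemma lie_alg_aut_if_preserves_V:
  assumes aut: "lie_ring_aut br f" and fV: "f ` V = V"
  shows "lie_alg_aut br f"
proof -
  have hom: "lie_ring_hom br f" and inj: "inj f"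
    using aut by (auto simp: lie_ring_aut_def bij_is_inj)
  interpret additive f by (rule lie_ring_hom_additive[OF hom])
  obtain x where x: "x \<in> V" "f x = y" using y_in_V fV by (metis imageE)
  then have "x \<noteq> 0" using y_nonzero zero by auto
  define S where "S = {w \<in> V. br x w \<noteq> 0}"
  obtain w0 where w0: "w0 \<in> S" using exists_br_nonzero[OF x(1) \<open>x \<noteq> 0\<close>] by (auto simp: S_def)
  have nz: "f (br x w) \<noteq> 0" if "w \<in> S" for w
    using that injD[OF inj] zero by (force simp: S_def)
  have "V \<subseteq> span (insert x S)"
  proof
    fix w assume w: "w \<in> V"
    show "w \<in> span (insert x S)"
    proof (cases "w \<in> S")
      case True
      then show ?thesis by (simp add: span_base)
    next
      case False
      then have "w + w0 \<in> S" using w w0 subspace_add[OF subspace_V]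
        by (auto simp: S_def br_add_right)
      then have "(w + w0) - w0 \<in> span (insert x S)" using w0 by (intro span_diff span_base) auto
      then show ?thesis by simp
    qed
  qed
  then have "linear f"
    using linear_if_brackets_nonzero[OF hom _ x(1) x(2), of S] fV w0 nz by (auto simp: S_def)
  then show ?thesis using aut by (simp add: lie_alg_aut_def lie_alg_hom_def lie_ring_aut_def)
qed

lemma lie_ring_aut_central_factorization:
  assumes g: "lie_ring_aut br g"
  shows "\<exists>\<mu> fb. central_aut br \<mu> \<and> lie_alg_aut br fb \<and> g = \<mu> \<circ> fb"
proof (intro exI conjI)
  show "lie_alg_aut br (fbar g)"
    using lie_alg_aut_if_preserves_V fbar_lie_ring_aut[OF g] fbar_V[OF g] by blast
  show "central_aut br (g \<circ> inv (fbar g))"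
    using central_aut_comp_inv[OF g fbar_lie_ring_aut[OF g]] diff_fbar_in_center[OF g] .
  show "g = g \<circ> inv (fbar g) \<circ> fbar g"
    using inj_fbar[OF g] by (simp add: fun_eq_iff)
qed

end

theorem lemma3p1:
  fixes br :: "'a::real_vector \<Rightarrow> 'a \<Rightarrow> 'a"
    and V :: "'a set" and q :: nat and Y :: "nat \<Rightarrow> 'a" and f :: "'a \<Rightarrow> 'a"
  assumes lie: "lie_algebra br"
    and nil: "two_step_nilpotent br"
    and zc: "derived br = center br"
    and subV: "subspace V"
    and dsum1: "V \<inter> center br = {0}"
    and dsum2: "{v + z | v z. v \<in> V \<and> z \<in> center br} = UNIV"
    and q2: "q \<ge> 2"
    and Ybasis: "is_basis_of V Y 1 q"
    and Yind: "inj_on (\<lambda>j. br (Y 1) (Y j)) {2..q}"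
              "independent ((\<lambda>j. br (Y 1) (Y j)) ` {2..q})"
    and fhom: "lie_ring_hom br f"
    and fV: "f ` V \<subseteq> V"
  shows "(lie_ring_aut br f \<and> f ` V = V \<longrightarrow> lie_alg_aut br f)
    \<and> ((\<exists>X. is_basis_of V X 1 q \<and> f (X 1) = Y 1 \<and>
            (\<forall>j\<in>{2..q}. f (br (X 1) (X j)) \<noteq> 0)) \<longrightarrow> lie_alg_hom br f)
    \<and> (\<forall>g. lie_ring_aut br g \<longrightarrow>
          (\<exists>\<mu> fbar. central_aut br \<mu> \<and> lie_alg_aut br fbar \<and> g = \<mu> \<circ> fbar))"
proof -
  have Y_span: "V = span (insert (Y 1) (Y ` {2..q}))"
    using is_basis_of_span_insert_first[OF Ybasis] q2 by simp
  have "w \<in> span {Y 1}" if "w \<in> V" "br (Y 1) w = 0" for w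
    using real_lie_algebra.centralizer_of_bracket_independent
        [where br = br and y = "Y 1" and Y = Y, OF _ Yind] lie that Y_span
    by (simp add: real_lie_algebra_def)
  moreover have "Y 1 \<in> V" using Y_span span_base by blast
  moreover have "Y 1 \<noteq> 0" using is_basis_of_nonzero[OF Ybasis] q2 by simp
  ultimately interpret split_lie_algebra_line_centralizer br V "Y 1"
    using lie zc subV dsum1 dsum2 by unfold_locales blast+
  show ?thesis
  proof (intro conjI impI allI)
    show "lie_alg_aut br f" if "lie_ring_aut br f \<and> f ` V = V"
      using that lie_alg_aut_if_preserves_V by blast
  next
    assume "\<exists>X. is_basis_of V X 1 q \<and> f (X 1) = Y 1 \<and> (\<forall>j\<in>{2..q}. f (br (X 1) (X j)) \<noteq> 0)"
    then show "lie_alg_hom br f"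
      using lie_alg_hom_if_basis_brackets_nonzero[OF fhom fV _ q2] by blast
  next
    fix g assume "lie_ring_aut br g"
    then show "\<exists>\<mu> fbar. central_aut br \<mu> \<and> lie_alg_aut br fbar \<and> g = \<mu> \<circ> fbar"
      by (rule lie_ring_aut_central_factorization)
  qed
qed

end
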